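(* After the change of variables $g=g(\bar f,\bar g)$ given by relation (B), the curve in $(\bar f,\bar g)$ defined by $L_{1u}=0$ passes through the points $\bar Q(z)$ and $\bar Q(z/q)$, where $\bar Q(u)=(\bar f,\bar g)$ is defined by $\bar f=\bar f(u)$ and $$\frac{\bar g-\bar g(u)}{\bar g-\bar g(\frac{h_1}{qu})}=\frac{\bar Y(qu)}{\bar Y(u)},$$ for $u=z$ and $u=z/q$.
   Context: Let $h_1,h_2,u_1,\dots,u_8$ be generic nonzero complex parameters, $z$ generic, and $q=h_1^2h_2^2/(u_1\cdots u_8)$. Put $f(u)=u+h_1/u$, $g(u)=u+h_2/u$, $\bar f(u)=u+\frac{h_1}{qu}$, $\bar g(u)=u+\frac{h_2q}{u}$. Let $\varphi_u=(\bar f-g)\big(\frac{q\bar f}{h_1}-\frac{g}{h_2}\big)-(\frac{h_1}{q}-h_2)\big(\frac q{h_1}-\frac1{h_2}\big)$. Let $U(z)=\prod_{i=1}^8(z-u_i)=\sum_{i=0}^8(-1)^i m_{8-i}z^i$ (so $m_0=1$, $m_8=h_1^2h_2^2/q$). For a parameter $h$ define polynomials in a variable $x$: $P_n(h,x)=m_0x^4-m_1x^3+(m_2-3hm_0-h^{-3}m_8)x^2+(2hm_1-m_3+h^{-2}m_7)x+(h^2m_0-hm_2+m_4-h^{-1}m_6+h^{-2}m_8)$, $P_d(h,x)=m_8x^4-hm_7x^3+(h^2m_6-3hm_8-h^5m_0)x^2+(2h^2m_7-h^3m_5+h^5m_1)x+(h^6m_0-h^5m_2+h^4m_4-h^3m_6+h^2m_8)$.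 Define, for variables $f_0,f,g$, $V(f_0,f)=q\Big[(f_0-g)(f-g)-\big(\tfrac{h_1}{q}-h_2\big)(h_1-h_2)\tfrac1{h_2}\Big]P_d(h_2,g)-h_1^2h_2^4\Big[\big(\tfrac{f_0q}{h_1}-\tfrac{g}{h_2}\big)\big(\tfrac{f}{h_1}-\tfrac{g}{h_2}\big)-\big(\tfrac{q}{h_1}-\tfrac1{h_2}\big)\big(\tfrac1{h_1}-\tfrac1{h_2}\big)h_2\Big]P_n(h_2,g)$ (it also depends on $g$). For a function $\bar Y$ of $z$ and variables $(\bar f,g)$ define $$L_{1u}=\frac{U(\frac zq)}{(z^2-h_1q^2)\{\bar f-\bar f(\frac zq)\}}\Big[\bar Y(\tfrac zq)-\frac{z^8}{h_1^4q^4}\frac{U(\frac{h_1}{z})}{U(\frac zq)}\frac{g-g(\frac zq)}{g-g(\frac{h_1}{z})}\bar Y(z)\Big]+\frac{z^8U(\frac{h_1}{qz})}{(qz^2-h_1)h_1^4\{\bar f-\bar f(z)\}}\Big[\bar Y(qz)-\frac{h_1^4}{q^4z^8}\frac{U(z)}{U(\frac{h_1}{qz})}\frac{g-g(\frac{h_1}{qz})}{g-g(z)}\bar Y(z)\Big]+\frac{(h_1-h_2q)z^2(z^2-h_1)V(\bar f,f(z))}{h_1^3h_2^3q^5\,g\,\varphi_u\{g-g(\frac{h_1}{z})\}\{g-g(z)\}}\bar Y(z).$$ Relation (B), defining a birational correspondence $g\leftrightarrow\bar g$ depending on $\bar f$: $$\frac{(\bar f-\bar g)(\bar f-g)-(\frac{h_1}{q}-h_2q)(\frac{h_1}{q}-h_2)\frac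 q{h_1}}{(\frac{\bar fq}{h_1}-\frac{\bar g}{h_2q})(\frac{\bar fq}{h_1}-\frac g{h_2})-(\frac q{h_1}-\frac1{h_2q})(\frac q{h_1}-\frac1{h_2})\frac{h_1}q}=\frac{h_1^4h_2^2}{q^3}\frac{P_n(\frac{h_1}q,\bar f)}{P_d(\frac{h_1}q,\bar f)}.$$ *)

theory Defs
  imports Complex_Main
begin

text \<open>Parameters: h1 h2 :: complex, u :: nat => complex (only u 1, ..., u 8 are used).\<close>

definition qpar :: "complex \<Rightarrow> complex \<Rightarrow> (nat \<Rightarrow> complex) \<Rightarrow> complex" where
  "qpar h1 h2 u = h1^2 * h2^2 / (\<Prod>i\<in>{1..8}. u i)"

definition Upol :: "(nat \<Rightarrow> complex) \<Rightarrow> complex \<Rightarrow> complex" where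
  "Upol u x = (\<Prod>i\<in>{1..8}. (x - u i))"

text \<open>Elementary symmetric functions: U(x) = sum_i (-1)^i m_(8-i) x^i.\<close>
definition msym :: "(nat \<Rightarrow> complex) \<Rightarrow> nat \<Rightarrow> complex" where
  "msym u k = (\<Sum>S\<in>{S. S \<subseteq> {1..8} \<and> card S = k}. \<Prod>i\<in>S. u i)"

definition ffun :: "complex \<Rightarrow> complex \<Rightarrow> complex" where
  "ffun h1 v = v + h1 / v"
definition gfun :: "complex \<Rightarrow> complex \<Rightarrow> complex" where
  "gfun h2 v = v + h2 / v"
definition fbfun :: "complex \<Rightarrow> complex \<Rightarrow> complex \<Rightarrow> complex" where
  "fbfun h1 q v = v + h1 / (q * v)"
definition gbfun :: "complex \<Rightarrow> complex \<Rightarrow> complex \<Rightarrow> complex" where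
  "gbfun h2 q v = v + h2 * q / v"

definition phi_u :: "complex \<Rightarrow> complex \<Rightarrow> complex \<Rightarrow> complex \<Rightarrow> complex \<Rightarrow> complex" where
  "phi_u h1 h2 q fb g = (fb - g) * (q * fb / h1 - g / h2) - (h1 / q - h2) * (q / h1 - 1 / h2)"

definition Pn :: "(nat \<Rightarrow> complex) \<Rightarrow> complex \<Rightarrow> complex \<Rightarrow> complex" where
  "Pn u h x =
     msym u 0 * x^4 - msym u 1 * x^3
     + (msym u 2 - 3 * h * msym u 0 - msym u 8 / h^3) * x^2
     + (2 * h * msym u 1 - msym u 3 + msym u 7 / h^2) * x
     + (h^2 * msym u 0 - h * msym u 2 + msym u 4 - msym u 6 / h + msym u 8 / h^2)"

definition Pd :: "(nat \<Rightarrow> complex) \<Rightarrow> complex \<Rightarrow> complex \<Rightarrow> complex" where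
  "Pd u h x =
     msym u 8 * x^4 - h * msym u 7 * x^3
     + (h^2 * msym u 6 - 3 * h * msym u 8 - h^5 * msym u 0) * x^2
     + (2 * h^2 * msym u 7 - h^3 * msym u 5 + h^5 * msym u 1) * x
     + (h^6 * msym u 0 - h^5 * msym u 2 + h^4 * msym u 4 - h^3 * msym u 6 + h^2 * msym u 8)"

definition Vfun :: "complex \<Rightarrow> complex \<Rightarrow> (nat \<Rightarrow> complex) \<Rightarrow> complex \<Rightarrow> complex \<Rightarrow> complex \<Rightarrow> complex" where
  "Vfun h1 h2 u g f0 f =
     (let q = qpar h1 h2 u in
      q * ((f0 - g) * (f - g) - (h1 / q - h2) * (h1 - h2) * (1 / h2)) * Pd u h2 g
      - h1^2 * h2^4 * ((f0 * q / h1 - g / h2) * (f / h1 - g / h2)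
                       - (q / h1 - 1 / h2) * (1 / h1 - 1 / h2) * h2) * Pn u h2 g)"

text \<open>The three summands of L_1u: the two bracketed terms (without the pole factors
  1/(fb - fbar(z/q)) and 1/(fb - fbar(z))) and the third term.\<close>
definition L1u_A :: "complex \<Rightarrow> complex \<Rightarrow> (nat \<Rightarrow> complex) \<Rightarrow> complex \<Rightarrow> (complex \<Rightarrow> complex) \<Rightarrow> complex \<Rightarrow> complex" where
  "L1u_A h1 h2 u z Y g =
     (let q = qpar h1 h2 u in
      Upol u (z / q) / (z^2 - h1 * q^2) *
      (Y (z / q) - z^8 / (h1^4 * q^4) * (Upol u (h1 / z) / Upol u (z / q))
                   * ((g - gfun h2 (z / q)) / (g - gfun h2 (h1 / z))) * Y z))"

definition L1u_B :: "complex \<Rightarrow> complex \<Rightarrow> (nat \<Rightarrow> complex) \<Rightarrow> complex \<Rightarrow> (complex \<Rightarrow> complex) \<Rightarrow> complex \<Rightarrow> complex" where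
  "L1u_B h1 h2 u z Y g =
     (let q = qpar h1 h2 u in
      z^8 * Upol u (h1 / (q * z)) / ((q * z^2 - h1) * h1^4) *
      (Y (q * z) - h1^4 / (q^4 * z^8) * (Upol u z / Upol u (h1 / (q * z)))
                   * ((g - gfun h2 (h1 / (q * z))) / (g - gfun h2 z)) * Y z))"

definition L1u_C :: "complex \<Rightarrow> complex \<Rightarrow> (nat \<Rightarrow> complex) \<Rightarrow> complex \<Rightarrow> (complex \<Rightarrow> complex) \<Rightarrow> complex \<Rightarrow> complex \<Rightarrow> complex" where
  "L1u_C h1 h2 u z Y fb g =
     (let q = qpar h1 h2 u in
      (h1 - h2 * q) * z^2 * (z^2 - h1) * Vfun h1 h2 u g fb (ffun h1 z)
      / (h1^3 * h2^3 * q^5 * g * phi_u h1 h2 q fb g * (g - gfun h2 (h1 / z)) * (g - gfun h2 z))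
      * Y z)"

definition L1u :: "complex \<Rightarrow> complex \<Rightarrow> (nat \<Rightarrow> complex) \<Rightarrow> complex \<Rightarrow> (complex \<Rightarrow> complex) \<Rightarrow> complex \<Rightarrow> complex \<Rightarrow> complex" where
  "L1u h1 h2 u z Y fb g =
     (let q = qpar h1 h2 u in
      L1u_A h1 h2 u z Y g / (fb - fbfun h1 q (z / q))
      + L1u_B h1 h2 u z Y g / (fb - fbfun h1 q z)
      + L1u_C h1 h2 u z Y fb g)"

text \<open>The curve L_1u = 0 with the poles in fb cleared, i.e.
  (fb - fbar z) (fb - fbar (z/q)) L_1u, written without division by these factors.\<close>
definition L1u_curve :: "complex \<Rightarrow> complex \<Rightarrow> (nat \<Rightarrow> complex) \<Rightarrow> complex \<Rightarrow> (complex \<Rightarrow> complex) \<Rightarrow> complex \<Rightarrow> complex \<Rightarrow> complex" where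
  "L1u_curve h1 h2 u z Y fb g =
     (let q = qpar h1 h2 u in
      (fb - fbfun h1 q z) * L1u_A h1 h2 u z Y g
      + (fb - fbfun h1 q (z / q)) * L1u_B h1 h2 u z Y g
      + (fb - fbfun h1 q z) * (fb - fbfun h1 q (z / q)) * L1u_C h1 h2 u z Y fb g)"

lemma L1u_curve_eq:
  assumes "fb \<noteq> fbfun h1 (qpar h1 h2 u) z" "fb \<noteq> fbfun h1 (qpar h1 h2 u) (z / qpar h1 h2 u)"
  shows "L1u_curve h1 h2 u z Y fb g
        = (fb - fbfun h1 (qpar h1 h2 u) z) * (fb - fbfun h1 (qpar h1 h2 u) (z / qpar h1 h2 u))
          * L1u h1 h2 u z Y fb g"
proof -
  have aux: "(x - a) * A + (x - b) * B + (x - a) * (x - b) * C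
           = (x - a) * (x - b) * (A / (x - b) + B / (x - a) + C)"
    if "x \<noteq> a" "x \<noteq> b" for x a b A B C :: complex
  proof -
    have "x - a \<noteq> 0" "x - b \<noteq> 0" using that by auto
    then show ?thesis by (simp add: distrib_left mult.assoc mult.left_commute)
  qed
  show ?thesis
    using aux[OF assms] unfolding L1u_curve_def L1u_def Let_def by simp
qed

definition relB_num :: "complex \<Rightarrow> complex \<Rightarrow> complex \<Rightarrow> complex \<Rightarrow> complex \<Rightarrow> complex \<Rightarrow> complex" where
  "relB_num h1 h2 q fb gb g =
     (fb - gb) * (fb - g) - (h1 / q - h2 * q) * (h1 / q - h2) * (q / h1)"
definition relB_den :: "complex \<Rightarrow> complex \<Rightarrow> complex \<Rightarrow> complex \<Rightarrow> complex \<Rightarrow> complex \<Rightarrow> complex" where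
  "relB_den h1 h2 q fb gb g =
     (fb * q / h1 - gb / (h2 * q)) * (fb * q / h1 - g / h2) - (q / h1 - 1 / (h2 * q)) * (q / h1 - 1 / h2) * (h1 / q)"

definition relB :: "complex \<Rightarrow> complex \<Rightarrow> (nat \<Rightarrow> complex) \<Rightarrow> complex \<Rightarrow> complex \<Rightarrow> complex \<Rightarrow> bool" where
  "relB h1 h2 u fb gb g =
     (let q = qpar h1 h2 u in
      relB_den h1 h2 q fb gb g \<noteq> 0 \<and> Pd u (h1 / q) fb \<noteq> 0 \<and>
      relB_num h1 h2 q fb gb g / relB_den h1 h2 q fb gb g
        = h1^4 * h2^2 / q^3 * (Pn u (h1 / q) fb / Pd u (h1 / q) fb))"

end

theory Submission
  imports Defs
begin

text \<open>Write \<open>fb = fbar w = w + s\<close> with \<open>s = h1/(q w)\<close>, so that \<open>h1/q = w s\<close>. In this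
  parametrisation \<open>Pn\<close> and \<open>Pd\<close> become divided differences of \<open>U\<close>, namely
  \<open>(v - s) Pn = U(v)/v^3 - U(s)/s^3\<close> and \<open>(v - s) Pd = v^5 U(s) - s^5 U(v)\<close>, while the numerator
  and denominator of (B) become combinations of \<open>X = (gb - gbar v)(g - g v)\<close> and
  \<open>Y = (gb - gbar s)(g - g s)\<close>. Cross-multiplied, (B) factors as
  \<open>(v^2 - s^2)(v^4 U(s) X - s^4 U(v) Y) = 0\<close>. The second factor, together with the relation
  defining \<open>gb\<close>, is exactly the vanishing of the bracket in \<open>L1u\<close> that carries the pole at
  \<open>fbar w\<close>; the other summands of the cleared curve contain the factor \<open>fb - fbar w\<close>.\<close>

lemma prod_diff_eq_esymm_sum:
  fixes u :: "'i \<Rightarrow> 'a::comm_ring_1"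
  assumes "finite I"
  shows "(\<Prod>i\<in>I. x - u i)
       = (\<Sum>k\<le>card I. (-1)^k * (\<Sum>S | S \<subseteq> I \<and> card S = k. \<Prod>i\<in>S. u i) * x^(card I - k))"
proof -
  have "(\<Prod>i\<in>I. x - u i) = (\<Prod>i\<in>I. (- u i) + x)" by simp
  also have "\<dots> = (\<Sum>S\<in>Pow I. (\<Prod>i\<in>S. - u i) * (\<Prod>i\<in>I - S. x))"
    using assms by (rule prod_add)
  also have "\<dots> = (\<Sum>S\<in>Pow I. (-1)^card S * (\<Prod>i\<in>S. u i) * x^(card I - card S))"
    using assms by (intro sum.cong refl) (auto simp: prod_uminus card_Diff_subset finite_subset)
  also have "\<dots> = (\<Sum>k\<le>card I. \<Sum>S | S \<in> Pow I \<and> card S = k. (-1)^card S * (\<Prod>i\<in>S. u i) * x^(card I - card S))"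
    using assms by (intro sum.group[symmetric]) (auto intro: card_mono)
  also have "\<dots> = (\<Sum>k\<le>card I. (-1)^k * (\<Sum>S | S \<subseteq> I \<and> card S = k. \<Prod>i\<in>S. u i) * x^(card I - k))"
    by (intro sum.cong refl) (simp add: sum_distrib_left sum_distrib_right mult_ac)
  finally show ?thesis .
qed

lemma Upol_eq_msym:
  "Upol u x = msym u 0 * x^8 - msym u 1 * x^7 + msym u 2 * x^6 - msym u 3 * x^5 + msym u 4 * x^4
     - msym u 5 * x^3 + msym u 6 * x^2 - msym u 7 * x + msym u 8"
  unfolding Upol_def msym_def prod_diff_eq_esymm_sum[OF finite_atLeastAtMost]
  by (simp add: numeral_eq_Suc atMost_Suc)

lemma Pn_parametrized:
  fixes v s :: complex
  assumes "v \<noteq> 0" "s \<noteq> 0"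
  shows "(v - s) * Pn u (v*s) (v+s) = Upol u v / v^3 - Upol u s / s^3"
  unfolding Pn_def Upol_eq_msym using assms by (simp add: field_simps) algebra

lemma Pd_parametrized:
  "(v - s) * Pd u (v*s) (v+s) = v^5 * Upol u s - s^5 * Upol u v"
  unfolding Pd_def Upol_eq_msym by algebra

lemma relB_num_parametrized:
  fixes v s q h2 gb g :: complex
  assumes "v \<noteq> 0" "s \<noteq> 0" "q \<noteq> 0" "h2 \<noteq> 0"
  shows "(v - s) * relB_num (q*v*s) h2 q (v+s) gb g
       = v * ((gb - gbfun h2 q v) * (g - gfun h2 v)) - s * ((gb - gbfun h2 q s) * (g - gfun h2 s))"
  using assms unfolding relB_num_def gbfun_def gfun_def by (simp add: field_simps)

lemma relB_den_parametrized:
  fixes v s q h2 gb g :: complex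
  assumes "v \<noteq> 0" "s \<noteq> 0" "q \<noteq> 0" "h2 \<noteq> 0"
  shows "(v - s) * relB_den (q*v*s) h2 q (v+s) gb g
       = (v * ((gb - gbfun h2 q s) * (g - gfun h2 s)) - s * ((gb - gbfun h2 q v) * (g - gfun h2 v)))
         / (h2^2 * q)"
  using assms unfolding relB_den_def gbfun_def gfun_def
  by (simp add: field_simps) (simp add: algebra_simps power2_eq_square)

lemma relB_den_affine:
  "relB_den h1 h2 q fb gb (g + 2) = 2 * relB_den h1 h2 q fb gb (g + 1) - relB_den h1 h2 q fb gb g"
  unfolding relB_den_def by (simp add: algebra_simps add_divide_distrib diff_divide_distrib)

lemma relB_residual_parametrized:
  fixes v s q h2 gb g :: complex
  assumes "v \<noteq> 0" "s \<noteq> 0" "q \<noteq> 0" "h2 \<noteq> 0"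
  shows "(v - s)^2 * (Pd u (v*s) (v+s) * relB_num (q*v*s) h2 q (v+s) gb g
            - (q*v*s)^4 * h2^2 / q^3 * Pn u (v*s) (v+s) * relB_den (q*v*s) h2 q (v+s) gb g)
       = (v^2 - s^2) * (v^4 * Upol u s * ((gb - gbfun h2 q v) * (g - gfun h2 v))
                        - s^4 * Upol u v * ((gb - gbfun h2 q s) * (g - gfun h2 s)))"
proof -
  define X where "X = (gb - gbfun h2 q v) * (g - gfun h2 v)"
  define Y where "Y = (gb - gbfun h2 q s) * (g - gfun h2 s)"
  have "(v - s)^2 * (Pd u (v*s) (v+s) * relB_num (q*v*s) h2 q (v+s) gb g
            - (q*v*s)^4 * h2^2 / q^3 * Pn u (v*s) (v+s) * relB_den (q*v*s) h2 q (v+s) gb g)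
      = ((v - s) * Pd u (v*s) (v+s)) * ((v - s) * relB_num (q*v*s) h2 q (v+s) gb g)
        - (q*v*s)^4 * h2^2 / q^3 * ((v - s) * Pn u (v*s) (v+s)) * ((v - s) * relB_den (q*v*s) h2 q (v+s) gb g)"
    by (simp add: power2_eq_square algebra_simps)
  also have "\<dots> = (v^5 * Upol u s - s^5 * Upol u v) * (v * X - s * Y)
        - (q*v*s)^4 * h2^2 / q^3 * (Upol u v / v^3 - Upol u s / s^3) * ((v * Y - s * X) / (h2^2 * q))"
    unfolding Pd_parametrized Pn_parametrized[OF assms(1,2)] relB_num_parametrized[OF assms]
      relB_den_parametrized[OF assms] X_def Y_def ..
  also have "\<dots> = (v^2 - s^2) * (v^4 * Upol u s * X - s^4 * Upol u v * Y)"
    using assms by (simp add: field_simps) algebra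
  finally show ?thesis unfolding X_def Y_def .
qed

lemma relB_iff_residual:
  fixes h1 h2 fb gb g :: complex and u :: "nat \<Rightarrow> complex"
  defines "q \<equiv> qpar h1 h2 u"
  shows "relB h1 h2 u fb gb g \<longleftrightarrow>
           relB_den h1 h2 q fb gb g \<noteq> 0 \<and> Pd u (h1 / q) fb \<noteq> 0 \<and>
           Pd u (h1 / q) fb * relB_num h1 h2 q fb gb g
             - h1^4 * h2^2 / q^3 * Pn u (h1 / q) fb * relB_den h1 h2 q fb gb g = 0"
proof -
  have "a / b = K * (c / d) \<longleftrightarrow> d * a - K * c * b = 0" if "b \<noteq> 0" "d \<noteq> 0" for a b c d K :: complex
    using that by (auto simp: field_simps)
  then show ?thesis unfolding relB_def Let_def q_def[symmetric] by metis
qed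

text \<open>For \<open>v = -s\<close> the factor \<open>v^2 - s^2\<close> vanishes, so (B) holds for every \<open>g'\<close> with
  nonzero denominator, and uniqueness of \<open>g\<close> is violated.\<close>

lemma relB_unique_imp_balance:
  fixes h1 h2 v s gb g :: complex and u :: "nat \<Rightarrow> complex"
  defines "q \<equiv> qpar h1 h2 u"
  assumes nz: "v \<noteq> 0" "s \<noteq> 0" "q \<noteq> 0" "h2 \<noteq> 0" and h1: "h1 = q * v * s"
    and rel: "relB h1 h2 u (v + s) gb g"
    and unique: "\<forall>g'. relB h1 h2 u (v + s) gb g' \<longrightarrow> g' = g"
  shows "v^4 * Upol u s * ((gb - gbfun h2 q v) * (g - gfun h2 v))
       = s^4 * Upol u v * ((gb - gbfun h2 q s) * (g - gfun h2 s))"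
proof -
  define den where "den g' = relB_den h1 h2 q (v + s) gb g'" for g'
  define R where "R g' = Pd u (v*s) (v+s) * relB_num h1 h2 q (v+s) gb g'
                        - h1^4 * h2^2 / q^3 * Pn u (v*s) (v+s) * den g'" for g'
  have rel_iff: "relB h1 h2 u (v + s) gb g' \<longleftrightarrow> den g' \<noteq> 0 \<and> Pd u (v*s) (v+s) \<noteq> 0 \<and> R g' = 0"
    for g'
  proof -
    have "h1 / q = v * s" using h1 nz by simp
    then show ?thesis unfolding relB_iff_residual den_def R_def q_def by simp
  qed
  have residual: "(v - s)^2 * R g'
      = (v^2 - s^2) * (v^4 * Upol u s * ((gb - gbfun h2 q v) * (g' - gfun h2 v))
                       - s^4 * Upol u v * ((gb - gbfun h2 q s) * (g' - gfun h2 s)))" for g'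
    unfolding R_def den_def h1 by (rule relB_residual_parametrized[OF nz])
  consider "v = s" | "v = - s" | "v^2 \<noteq> s^2"
    using power2_eq_iff by blast
  then show ?thesis
  proof cases
    case 1
    then show ?thesis by simp
  next
    case 2
    have "R g' = 0" for g'
      using residual[of g'] 2 nz by simp
    then have rel_any: "relB h1 h2 u (v + s) gb g'" if "den g' \<noteq> 0" for g'
      using rel that unfolding rel_iff by blast
    have "den (g + 2) = 2 * den (g + 1) - den g"
      unfolding den_def by (rule relB_den_affine)
    moreover have "den g \<noteq> 0" using rel rel_iff by blast
    ultimately have "den (g + 1) \<noteq> 0 \<or> den (g + 2) \<noteq> 0" by auto
    moreover have "g + 1 \<noteq> g" "g + 2 \<noteq> g" by simp_all
    ultimately obtain g' where "g' \<noteq> g" "den g' \<noteq> 0" by blast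
    then show ?thesis using rel_any unique by blast
  next
    case 3
    have "R g = 0" using rel rel_iff by blast
    then show ?thesis using residual[of g] 3 by simp
  qed
qed

lemma divide_eq_of_cross_mult:
  fixes a b c d x y U V :: "'a::field"
  assumes "x * U * (a * c) = y * V * (b * d)" and "x \<noteq> 0" "U \<noteq> 0" "b \<noteq> 0" "c \<noteq> 0"
  shows "a / b = y / x * (V / U) * (d / c)"
proof -
  have "a / b = x * U * (a * c) / (x * U * (b * c))" using assms(2-) by simp
  also have "\<dots> = y / x * (V / U) * (d / c)" unfolding assms(1) using assms(4) by (simp add: mult.assoc)
  finally show ?thesis .
qed

lemma L1u_B_vanishes:
  fixes h1 h2 z s gb g :: complex and u :: "nat \<Rightarrow> complex" and Y :: "complex \<Rightarrow> complex"
  defines "q \<equiv> qpar h1 h2 u"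
  assumes nz: "q \<noteq> 0" "z \<noteq> 0" and h1: "h1 = q * z * s"
    and QY: "Y (q * z) = Y z * ((gb - gbfun h2 q z) / (gb - gbfun h2 q s))"
    and balance: "z^4 * Upol u s * ((gb - gbfun h2 q z) * (g - gfun h2 z))
                = s^4 * Upol u z * ((gb - gbfun h2 q s) * (g - gfun h2 s))"
    and nz': "gb \<noteq> gbfun h2 q s" "g \<noteq> gfun h2 z" "Upol u s \<noteq> 0"
  shows "L1u_B h1 h2 u z Y g = 0"
proof -
  have s: "h1 / (q * z) = s" using h1 nz by simp
  have "h1^4 / (q^4 * z^8) = s^4 / z^4" using h1 nz by (simp add: field_simps)
  moreover have "Y (q * z) = s^4 / z^4 * (Upol u z / Upol u s) * ((g - gfun h2 s) / (g - gfun h2 z)) * Y z"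
    using QY divide_eq_of_cross_mult[OF balance] nz nz' by simp
  ultimately show ?thesis unfolding L1u_B_def Let_def q_def[symmetric] s by simp
qed

lemma L1u_A_vanishes:
  fixes h1 h2 z v s gb g :: complex and u :: "nat \<Rightarrow> complex" and Y :: "complex \<Rightarrow> complex"
  defines "q \<equiv> qpar h1 h2 u"
  assumes nz: "q \<noteq> 0" "v \<noteq> 0" "s \<noteq> 0" and z: "z = q * v" and h1: "h1 = q * v * s"
    and QY: "Y (q * v) = Y v * ((gb - gbfun h2 q v) / (gb - gbfun h2 q s))"
    and balance: "v^4 * Upol u s * ((gb - gbfun h2 q v) * (g - gfun h2 v))
                = s^4 * Upol u v * ((gb - gbfun h2 q s) * (g - gfun h2 s))"
    and nz': "gb \<noteq> gbfun h2 q s" "g \<noteq> gfun h2 s" "Upol u v \<noteq> 0"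
  shows "L1u_A h1 h2 u z Y g = 0"
proof -
  have v: "z / q = v" and s: "h1 / z = s" using z h1 nz by auto
  have "z^8 / (h1^4 * q^4) = v^4 / s^4" using z h1 nz by (simp add: field_simps)
  moreover have "gb \<noteq> gbfun h2 q v"
    using balance nz nz' by auto
  then have "Y v = Y (q * v) * ((gb - gbfun h2 q s) / (gb - gbfun h2 q v))"
    using QY nz' by simp
  with divide_eq_of_cross_mult[OF balance[symmetric]] nz nz' \<open>gb \<noteq> gbfun h2 q v\<close>
  have "Y v = v^4 / s^4 * (Upol u s / Upol u v) * ((g - gfun h2 v) / (g - gfun h2 s)) * Y z"
    unfolding z by simp
  ultimately show ?thesis unfolding L1u_A_def Let_def q_def[symmetric] v s by simp
qed

theorem lemma6:
  fixes h1 h2 z w fb gb g :: complex and u :: "nat \<Rightarrow> complex" and Y :: "complex \<Rightarrow> complex"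
  defines "q \<equiv> qpar h1 h2 u"
  assumes nz: "h1 \<noteq> 0" "h2 \<noteq> 0" "z \<noteq> 0" "\<forall>i\<in>{1..8}. u i \<noteq> 0"
    and gen_z: "z^2 \<noteq> h1 * q^2" "q * z^2 \<noteq> h1"
    and gen_U: "Upol u (z / q) \<noteq> 0" "Upol u (h1 / (q * z)) \<noteq> 0" "Upol u z \<noteq> 0" "Upol u (h1 / z) \<noteq> 0"
    and gen_f: "fbfun h1 q z \<noteq> fbfun h1 q (z / q)"
    and w: "w = z \<or> w = z / q"
    and Qf: "fb = fbfun h1 q w"
    and Qg_gen: "Y w \<noteq> 0" "gb \<noteq> gbfun h2 q (h1 / (q * w))"
                "gbfun h2 q w \<noteq> gbfun h2 q (h1 / (q * w))"
    and Qg: "(gb - gbfun h2 q w) / (gb - gbfun h2 q (h1 / (q * w))) = Y (q * w) / Y w"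
    and B: "relB h1 h2 u fb gb g"
    and B_unique: "\<forall>g'. relB h1 h2 u fb gb g' \<longrightarrow> g' = g"
    and gen_g: "g \<noteq> 0" "g \<noteq> gfun h2 z" "g \<noteq> gfun h2 (h1 / z)"
               "g \<noteq> gfun h2 (z / q)" "g \<noteq> gfun h2 (h1 / (q * z))"
               "phi_u h1 h2 q fb g \<noteq> 0"
  shows "L1u_curve h1 h2 u z Y fb g = 0"
proof -
  have q_nz: "q \<noteq> 0" using nz unfolding q_def qpar_def by simp
  have w_nz: "w \<noteq> 0" using w nz(3) q_nz by auto
  define s where "s = h1 / (q * w)"
  have s_nz: "s \<noteq> 0" and h1: "h1 = q * w * s" using nz(1) q_nz w_nz unfolding s_def by auto
  have fb: "fb = w + s" unfolding Qf fbfun_def s_def ..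
  have balance: "w^4 * Upol u s * ((gb - gbfun h2 q w) * (g - gfun h2 w))
               = s^4 * Upol u w * ((gb - gbfun h2 q s) * (g - gfun h2 s))"
    using relB_unique_imp_balance[OF w_nz s_nz _ nz(2)] q_nz h1 B B_unique
    unfolding fb q_def by blast
  have QY: "Y (q * w) = Y w * ((gb - gbfun h2 q w) / (gb - gbfun h2 q s))"
    using Qg Qg_gen(1) unfolding s_def by (simp add: field_simps)
  have gb_s: "gb \<noteq> gbfun h2 q s" using Qg_gen(2) unfolding s_def .
  from w show ?thesis
  proof
    assume w_z: "w = z"
    have s_z: "h1 / (q * z) = s" unfolding s_def w_z ..
    have "L1u_B h1 h2 u z Y g = 0"
      using L1u_B_vanishes[where ?h1.0 = h1 and ?h2.0 = h2 and u = u, folded q_def,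
          OF q_nz nz(3) h1[unfolded w_z] QY[unfolded w_z] balance[unfolded w_z] gb_s gen_g(2)]
        gen_U(2) unfolding s_z by blast
    then show ?thesis unfolding L1u_curve_def Let_def q_def[symmetric] Qf w_z by simp
  next
    assume w_zq: "w = z / q"
    have z: "z = q * w" and s_z: "h1 / z = s" unfolding s_def w_zq using q_nz by simp_all
    have "L1u_A h1 h2 u z Y g = 0"
      using L1u_A_vanishes[where ?h1.0 = h1 and ?h2.0 = h2 and u = u, folded q_def,
          OF q_nz w_nz s_nz z h1 QY balance gb_s]
        gen_g(3) gen_U(1) unfolding s_z w_zq by blast
    then show ?thesis unfolding L1u_curve_def Let_def q_def[symmetric] Qf w_zq by simp
  qed
qed

end
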